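(* Let $k$ be even, and for $s\in\mathbb{F}_{2^{k-1}}$ let $L_s:\mathbb{F}_{2^{k-1}}\times\mathbb{F}_2\to\mathbb{F}_{2^{k-1}}\times\mathbb{F}_2$ be $L_s(x,\alpha)=(s^2x+s\operatorname{tr}(sx)+\alpha s,\operatorname{tr}(sx))$. Then: (i) $(x,\alpha)\cdot L_s(x,\alpha)=0$ for all $s,x\in\mathbb{F}_{2^{k-1}}$, $\alpha\in\mathbb{F}_2$; (ii) $(x,\alpha)\cdot L_s(y,\beta)=L_s(x,\alpha)\cdot(y,\beta)$ for all $s,x,y$, $\alpha,\beta$; (iii) if $r\neq s$ and $L_r(x,\alpha)=L_s(x,\alpha)$, then $(x,\alpha)=(0,0)$.
   Context: $\operatorname{tr}:\mathbb{F}_{2^{k-1}}\to\mathbb{F}_2$ is the field trace, and the bilinear form on $\mathbb{F}_{2^{k-1}}\times\mathbb{F}_2$ is $(x,\alpha)\cdot(y,\beta)=\operatorname{tr}(xy)+\alpha\beta$. *)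

theory Defs
  imports Main
begin

text \<open>The field F_{2^m} is modelled as a finite field type 'a with CARD('a) = 2^m;
  F_2 is its prime subfield {0,1}.  The absolute trace F_{2^m} -> F_2:\<close>
definition tr :: "nat \<Rightarrow> 'a::field \<Rightarrow> 'a" where
  "tr m x = (\<Sum>i<m. x ^ (2 ^ i))"

definition bform :: "nat \<Rightarrow> 'a::field \<times> 'a \<Rightarrow> 'a \<times> 'a \<Rightarrow> 'a" where
  "bform m u v = tr m (fst u * fst v) + snd u * snd v"

definition Lmap :: "nat \<Rightarrow> 'a::field \<Rightarrow> 'a \<times> 'a \<Rightarrow> 'a \<times> 'a" where
  "Lmap m s u = (s^2 * fst u + s * tr m (s * fst u) + snd u * s, tr m (s * fst u))"

end

theory Submission
  imports Defs
begin

text \<open>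
  Over a field of characteristic 2 in which every element satisfies x^(2^m) = x, the trace
  tr is additive, invariant under squaring and hence takes only the values 0 and 1.  Expanding
  the form with these rules gives
  (x,\<alpha>)\<cdot>L_s(y,\<beta>) = tr(s^2xy) + tr(sx)tr(sy) + \<beta> tr(sx) + \<alpha> tr(sy),
  which is symmetric in (x,\<alpha>) and (y,\<beta>) and vanishes on the diagonal.  If L_r and L_s
  agree at (x,\<alpha>), then tr(rx) = tr(sx) = t and (r+s)x = t + \<alpha>; for x \<noteq> 0 this forces
  (r+s)x = 1, contradicting tr(rx) + tr(sx) = tr 1 = 1, which holds because m is odd.
\<close>

text \<open>The library's \<open>finite_field_power_card_eq_same\<close> is stated for the class
  \<open>finite_field\<close>, to which the sort \<open>{field, finite}\<close> is not known to belong.\<close>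

lemma power_card_UNIV_eq_self:
  fixes x :: "'a :: {field,finite}"
  shows "x ^ card (UNIV :: 'a set) = x"
proof (cases "x = 0")
  case False
  have "x * (\<Prod>y\<in>UNIV-{0}. x * y) = x * x ^ (card (UNIV :: 'a set) - 1) * \<Prod>(UNIV-{0})"
    by (simp add: prod.distrib mult_ac card_Diff_subset)
  also have "x * x ^ (card (UNIV :: 'a set) - 1) = x ^ card (UNIV :: 'a set)"
    using finite_UNIV_card_ge_0[where ?'a = 'a] by (simp flip: power_Suc)
  also have "(\<Prod>y\<in>UNIV-{0}. x * y) = (\<Prod>y\<in>UNIV-{0}. y)"
    by (rule prod.reindex_bij_witness[of _ "\<lambda>y. y / x" "\<lambda>y. x * y"]) (use False in auto)
  finally show ?thesis
    by simp
qed (use finite_UNIV_card_ge_0[where ?'a = 'a] in auto)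

lemma CHAR_eq_2_if_card_UNIV_power_2:
  assumes "card (UNIV :: 'a::{field,finite} set) = 2 ^ m" and "m \<noteq> 0"
  shows "CHAR('a) = 2"
proof (rule CHAR_eq_posI)
  have "(-1 :: 'a) = (-1) ^ 2 ^ m"
    using power_card_UNIV_eq_self[of "-1 :: 'a"] by (simp add: assms(1))
  also have "\<dots> = 1"
    using assms(2) by (simp add: power_minus1_even)
  finally show "of_nat 2 = (0 :: 'a)"
    by (metis add_eq_0_iff2 of_nat_numeral one_add_one)
next
  show "of_nat n \<noteq> (0 :: 'a)" if "0 < n" "n < 2" for n
    using that by (simp add: less_2_cases_iff)
qed simp

lemma tr_zero [simp]: "tr m (0 :: 'a::field) = 0"
  by (simp add: tr_def zero_power)

lemma tr_mult_0_or_1: "c = 0 \<or> c = 1 \<Longrightarrow> tr m ((c :: 'a::field) * x) = c * tr m x"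
  by auto

context
  assumes CHAR_2: "CHAR('a::field) = 2"
begin

lemma add_self_CHAR_2: "(x :: 'a) + x = 0"
  using uminus_CHAR_2[OF CHAR_2, of x] by (metis add.right_inverse)

lemma eq_if_add_eq_0_CHAR_2: "(x :: 'a) + y = 0 \<Longrightarrow> x = y"
  using uminus_CHAR_2[OF CHAR_2] by (metis add_eq_0_iff2)

lemma power2_add_CHAR_2: "((x :: 'a) + y) ^ 2 = x ^ 2 + y ^ 2"
proof -
  have "(x + y) ^ 2 = x ^ 2 + y ^ 2 + (x * y + x * y)"
    by (simp add: power2_eq_square algebra_simps)
  then show ?thesis
    by (simp add: add_self_CHAR_2)
qed

lemma power_two_power_add_CHAR_2: "((x :: 'a) + y) ^ 2 ^ i = x ^ 2 ^ i + y ^ 2 ^ i"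
proof (induction i)
  case (Suc i)
  have "(x + y) ^ 2 ^ Suc i = ((x + y) ^ 2 ^ i) ^ 2"
    by (simp only: power_Suc2 power_mult)
  also have "\<dots> = x ^ 2 ^ Suc i + y ^ 2 ^ Suc i"
    by (simp only: Suc.IH power2_add_CHAR_2 power_Suc2 power_mult)
  finally show ?case .
qed simp

lemma tr_add: "tr m ((x :: 'a) + y) = tr m x + tr m y"
  by (simp add: tr_def power_two_power_add_CHAR_2 sum.distrib)

lemma tr_one:
  assumes "odd m"
  shows "tr m (1 :: 'a) = 1"
proof -
  obtain q where "m = 2 * q + 1"
    using assms by (rule oddE)
  moreover have "of_nat (2 * q) = (0 :: 'a)"
    by (subst of_nat_eq_0_iff_char_dvd) (simp add: CHAR_2)
  ultimately show ?thesis
    by (simp add: tr_def)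
qed

context
  fixes m :: nat
  assumes frobenius: "\<And>x :: 'a. x ^ 2 ^ m = x"
begin

lemma tr_power2: "tr m ((x :: 'a) ^ 2) = tr m x"
proof -
  have "tr m (x ^ 2) = (\<Sum>i<m. x ^ 2 ^ Suc i)"
    by (simp add: tr_def mult.commute flip: power_mult)
  also have "\<dots> = (\<Sum>i<Suc m. x ^ 2 ^ i) - x"
    by (simp only: sum.lessThan_Suc_shift) simp
  also have "\<dots> = tr m x"
    by (simp add: tr_def frobenius)
  finally show ?thesis .
qed

lemma tr_idem: "tr m (x :: 'a) * tr m x = tr m x"
proof -
  have square_sum: "(\<Sum>i\<in>A. f i) ^ 2 = (\<Sum>i\<in>A. f i ^ 2)" for f :: "nat \<Rightarrow> 'a" and A
    by (induction A rule: infinite_finite_induct)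
      (simp_all add: power2_add_CHAR_2)
  have "tr m x ^ 2 = tr m (x ^ 2)"
    by (simp add: tr_def square_sum mult.commute flip: power_mult)
  then show ?thesis
    using tr_power2[of x] by (simp add: power2_eq_square)
qed

lemma tr_eq_0_or_1: "tr m (x :: 'a) = 0 \<or> tr m x = 1"
  using tr_idem[of x] by (metis mult_cancel_right2)

lemma bform_Lmap_eq:
  fixes s x y \<alpha> \<beta> :: 'a
  assumes "\<beta> \<in> {0, 1}"
  shows "bform m (x, \<alpha>) (Lmap m s (y, \<beta>))
           = tr m (s^2 * x * y) + tr m (s * x) * tr m (s * y) + \<beta> * tr m (s * x) + \<alpha> * tr m (s * y)"
proof -
  define u where "u = tr m (s * y)"
  have "x * (s^2 * y + s * u + \<beta> * s) = s^2 * x * y + u * (s * x) + \<beta> * (s * x)"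
    by (simp add: algebra_simps power2_eq_square)
  then have "bform m (x, \<alpha>) (Lmap m s (y, \<beta>))
               = tr m (s^2 * x * y) + tr m (u * (s * x)) + tr m (\<beta> * (s * x)) + \<alpha> * u"
    by (simp only: bform_def Lmap_def fst_conv snd_conv u_def[symmetric] tr_add)
  also have "\<dots> = tr m (s^2 * x * y) + u * tr m (s * x) + \<beta> * tr m (s * x) + \<alpha> * u"
  proof -
    have "tr m (u * (s * x)) = u * tr m (s * x)"
      by (rule tr_mult_0_or_1) (simp add: u_def tr_eq_0_or_1)
    moreover have "tr m (\<beta> * (s * x)) = \<beta> * tr m (s * x)"
      using assms by (intro tr_mult_0_or_1) auto
    ultimately show ?thesis
      by simp
  qed
  finally show ?thesis
    by (simp add: u_def mult.commute)
qed

lemma bform_Lmap_self: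
  fixes s x \<alpha> :: 'a
  assumes "\<alpha> \<in> {0, 1}"
  shows "bform m (x, \<alpha>) (Lmap m s (x, \<alpha>)) = 0"
proof -
  define t where "t = tr m (s * x)"
  have "tr m (s^2 * x * x) = t"
    using tr_power2[of "s * x"] by (simp add: t_def power2_eq_square mult_ac)
  then have "bform m (x, \<alpha>) (Lmap m s (x, \<alpha>)) = t + t * t + \<alpha> * t + \<alpha> * t"
    using assms by (simp add: bform_Lmap_eq t_def)
  also have "\<dots> = 0"
    by (simp add: t_def tr_idem add_self_CHAR_2)
  finally show ?thesis .
qed

lemma bform_Lmap_symmetric:
  fixes s x y \<alpha> \<beta> :: 'a
  assumes "\<alpha> \<in> {0, 1}" and "\<beta> \<in> {0, 1}"
  shows "bform m (x, \<alpha>) (Lmap m s (y, \<beta>)) = bform m (Lmap m s (x, \<alpha>)) (y, \<beta>)"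
proof -
  have "bform m (Lmap m s (x, \<alpha>)) (y, \<beta>) = bform m (y, \<beta>) (Lmap m s (x, \<alpha>))"
    by (simp add: bform_def mult.commute)
  then show ?thesis
    using assms by (simp add: bform_Lmap_eq algebra_simps)
qed

lemma Lmap_eq_Lmap_imp_zero:
  fixes r s x \<alpha> :: 'a
  assumes "odd m" and "\<alpha> \<in> {0, 1}" and "r \<noteq> s"
    and Lmap_eq: "Lmap m r (x, \<alpha>) = Lmap m s (x, \<alpha>)"
  shows "(x, \<alpha>) = (0, 0)"
proof -
  define t where "t = tr m (s * x)"
  define d where "d = r + s"
  have tr_rx: "tr m (r * x) = t"
    using Lmap_eq by (simp add: Lmap_def t_def)
  have fst_eq: "r^2 * x + r * t + \<alpha> * r = s^2 * x + s * t + \<alpha> * s"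
    using Lmap_eq tr_rx by (simp add: Lmap_def t_def mult.commute)
  have "d \<noteq> 0"
    using \<open>r \<noteq> s\<close> eq_if_add_eq_0_CHAR_2 by (auto simp: d_def)
  \<comment> \<open>(r + s)^2 = r^2 + s^2, so adding the first components of both sides factors through d\<close>
  have "d * (d * x + (t + \<alpha>))
          = (r^2 * x + r * t + \<alpha> * r) + (s^2 * x + s * t + \<alpha> * s) + (r * s * x + r * s * x)"
    by (simp add: d_def power2_eq_square algebra_simps)
  also have "\<dots> = 0"
    by (simp only: fst_eq add_self_CHAR_2 add_0)
  finally have dx: "d * x = t + \<alpha>"
    using \<open>d \<noteq> 0\<close> eq_if_add_eq_0_CHAR_2 by simp
  show ?thesis
  proof (cases "x = 0")
    case True
    then show ?thesis
      using dx by (simp add: t_def)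
  next
    case False
    then have "t + \<alpha> \<noteq> 0"
      using dx \<open>d \<noteq> 0\<close> by (metis mult_eq_0_iff)
    then have "d * x = 1"
      using dx \<open>\<alpha> \<in> {0, 1}\<close> tr_eq_0_or_1[of "s * x"] add_self_CHAR_2[of 1]
      by (auto simp: t_def)
    then have "t + t = 1"
      using tr_add[of m "r * x" "s * x"] tr_rx tr_one[OF \<open>odd m\<close>]
      by (simp add: d_def t_def algebra_simps)
    then show ?thesis
      using add_self_CHAR_2 by simp
  qed
qed

end

end

theorem mainTheorem9:
  fixes k :: nat
  assumes "even k"
    and "card (UNIV :: 'a::{field,finite} set) = 2 ^ (k - 1)"
  shows "(\<forall>(s::'a) x \<alpha>. \<alpha> \<in> {0, 1} \<longrightarrow>
            bform (k - 1) (x, \<alpha>) (Lmap (k - 1) s (x, \<alpha>)) = 0)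
       \<and> (\<forall>(s::'a) x y \<alpha> \<beta>. \<alpha> \<in> {0, 1} \<longrightarrow> \<beta> \<in> {0, 1} \<longrightarrow>
            bform (k - 1) (x, \<alpha>) (Lmap (k - 1) s (y, \<beta>))
              = bform (k - 1) (Lmap (k - 1) s (x, \<alpha>)) (y, \<beta>))
       \<and> (\<forall>(r::'a) s x \<alpha>. \<alpha> \<in> {0, 1} \<longrightarrow> r \<noteq> s \<longrightarrow>
            Lmap (k - 1) r (x, \<alpha>) = Lmap (k - 1) s (x, \<alpha>) \<longrightarrow> (x, \<alpha>) = (0, 0))"
proof -
  have "2 \<le> card (UNIV :: 'a set)"
    using card_mono[of UNIV "{0 :: 'a, 1}"] by simp
  then have "k - 1 \<noteq> 0"
    using assms(2) by (intro notI) simp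
  then have "odd (k - 1)"
    using \<open>even k\<close> by (cases k) auto
  have char_2: "CHAR('a) = 2"
    using assms(2) \<open>k - 1 \<noteq> 0\<close> by (rule CHAR_eq_2_if_card_UNIV_power_2)
  have frobenius: "\<And>x :: 'a. x ^ 2 ^ (k - 1) = x"
    using power_card_UNIV_eq_self[where 'a = 'a] assms(2) by simp
  show ?thesis
    by (intro conjI allI impI bform_Lmap_self[OF char_2 frobenius]
        bform_Lmap_symmetric[OF char_2 frobenius]
        Lmap_eq_Lmap_imp_zero[OF char_2 frobenius \<open>odd (k - 1)\<close>])
qed

end
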